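(* Let $A=[a_{ij}]_{i,j=1}^n\in\mathcal{M}_n(\mathbb{H})$ be an upper triangular nilpotent matrix whose associated graph $\mathcal{G}_A$ is a tree, and let $\beta=(\beta_1,\dots,\beta_n)\in\mathbb{S}^+_{\mathbb{R}^n}$. Then $$\bigcup_{z_1,\dots,z_n\in\mathbb{S}_{\mathbb{H}}}\Big\{\sum_{i,j=1}^n\beta_i\beta_j z_i^*a_{ij}z_j\Big\}=\sum_{i,j=1}^n\mathbb{S}_{\mathbb{H}}(0,\beta_i\beta_j|a_{ij}|),$$ where the right-hand side is a Minkowski (elementwise) sum of sets.
   Context: $\mathbb{H}$ denotes the real quaternions, $q^*$ the conjugate and $|q|^2=qq^*$. $\mathbb{S}_{\mathbb{H}}=\{z\in\mathbb{H}:|z|=1\}$; for $r\ge0$, $\mathbb{S}_{\mathbb{H}}(0,r)=\{q\in\mathbb{H}:|q|=r\}$ (so $\mathbb{S}_{\mathbb{H}}(0,0)=\{0\}$). $\mathbb{S}^+_{\mathbb{R}^n}=\{\beta\in\mathbb{R}^n:\|\beta\|=1,\ \beta_i\ge0\ \forall i\}$. For $A=[a_{ij}]\in\mathcal{M}_n(\mathbb{H})$, the graph $\mathcal{G}_A$ is the undirected graph on vertices $\{1,\dots,n\}$ with an edge between $i$ and $j$ (a loop if $i=j$) whenever $a_{ij}\neq0$ or $a_{ji}\neq0$. A cycle is a path from a vertex to itself (loops count as cycles); $A$ is cycle-free if $\mathcal{G}_A$ has no cycles, and $A$ is a tree (matrix) if $\mathcal{G}_A$ is connected and cycle-free. An upper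 triangular nilpotent quaternionic matrix has zero diagonal. *)

theory Defs
  imports Complex_Main
begin

datatype quat = Quat (qre: real) (qi: real) (qj: real) (qk: real)

lemma quat_eq_iff: "x = y \<longleftrightarrow> qre x = qre y \<and> qi x = qi y \<and> qj x = qj y \<and> qk x = qk y"
  by (cases x; cases y) auto

instantiation quat :: ring_1
begin
definition "0 = Quat 0 0 0 0"
definition "1 = Quat 1 0 0 0"
definition "x + y = Quat (qre x + qre y) (qi x + qi y) (qj x + qj y) (qk x + qk y)"
definition "x - y = Quat (qre x - qre y) (qi x - qi y) (qj x - qj y) (qk x - qk y)"
definition "- x = Quat (- qre x) (- qi x) (- qj x) (- qk x)"
definition "x * y = Quat
   (qre x * qre y - qi x * qi y - qj x * qj y - qk x * qk y)
   (qre x * qi y + qi x * qre y + qj x * qk y - qk x * qj y)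
   (qre x * qj y - qi x * qk y + qj x * qre y + qk x * qi y)
   (qre x * qk y + qi x * qj y - qj x * qi y + qk x * qre y)"
instance
  by standard (simp_all add: quat_eq_iff zero_quat_def one_quat_def plus_quat_def
      minus_quat_def uminus_quat_def times_quat_def algebra_simps)
end

definition qcnj :: "quat \<Rightarrow> quat" where
  "qcnj x = Quat (qre x) (- qi x) (- qj x) (- qk x)"

definition qnorm :: "quat \<Rightarrow> real" where
  "qnorm x = sqrt ((qre x)\<^sup>2 + (qi x)\<^sup>2 + (qj x)\<^sup>2 + (qk x)\<^sup>2)"

definition qreal :: "real \<Rightarrow> quat" where
  "qreal r = Quat r 0 0 0"

definition qsphere :: "real \<Rightarrow> quat set" where
  "qsphere r = {q. qnorm q = r}"

definition unit_quats :: "quat set" where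
  "unit_quats = qsphere 1"

section \<open>n x n quaternionic matrices, indices 0..<n\<close>

type_synonym qmat = "nat \<Rightarrow> nat \<Rightarrow> quat"

definition mmult :: "nat \<Rightarrow> qmat \<Rightarrow> qmat \<Rightarrow> qmat" where
  "mmult n A B = (\<lambda>i j. \<Sum>k<n. A i k * B k j)"

definition midentity :: qmat where
  "midentity = (\<lambda>i j. if i = j then 1 else 0)"

primrec mpow :: "nat \<Rightarrow> qmat \<Rightarrow> nat \<Rightarrow> qmat" where
  "mpow n A 0 = midentity"
| "mpow n A (Suc m) = mmult n (mpow n A m) A"

definition upper_triangular :: "nat \<Rightarrow> qmat \<Rightarrow> bool" where
  "upper_triangular n A \<longleftrightarrow> (\<forall>i<n. \<forall>j<n. j < i \<longrightarrow> A i j = 0)"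

definition nilpotent_mat :: "nat \<Rightarrow> qmat \<Rightarrow> bool" where
  "nilpotent_mat n A \<longleftrightarrow> (\<exists>m. \<forall>i<n. \<forall>j<n. mpow n A m i j = 0)"

definition gedge :: "qmat \<Rightarrow> nat \<Rightarrow> nat \<Rightarrow> bool" where
  "gedge A i j \<longleftrightarrow> A i j \<noteq> 0 \<or> A j i \<noteq> 0"

definition gwalk :: "nat \<Rightarrow> qmat \<Rightarrow> nat list \<Rightarrow> bool" where
  "gwalk n A p \<longleftrightarrow> p \<noteq> [] \<and> set p \<subseteq> {..<n} \<and>
     (\<forall>k. Suc k < length p \<longrightarrow> gedge A (p ! k) (p ! Suc k))"

definition graph_connected :: "nat \<Rightarrow> qmat \<Rightarrow> bool" where
  "graph_connected n A \<longleftrightarrow>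
     (\<forall>i<n. \<forall>j<n. \<exists>p. gwalk n A p \<and> hd p = i \<and> last p = j)"

definition has_cycle :: "nat \<Rightarrow> qmat \<Rightarrow> bool" where
  "has_cycle n A \<longleftrightarrow> (\<exists>i<n. gedge A i i) \<or>
     (\<exists>p. 3 \<le> length p \<and> distinct p \<and> gwalk n A p \<and> gedge A (last p) (hd p))"

definition cycle_free :: "nat \<Rightarrow> qmat \<Rightarrow> bool" where
  "cycle_free n A \<longleftrightarrow> \<not> has_cycle n A"

definition is_tree :: "nat \<Rightarrow> qmat \<Rightarrow> bool" where
  "is_tree n A \<longleftrightarrow> graph_connected n A \<and> cycle_free n A"

definition pos_unit_vec :: "nat \<Rightarrow> (nat \<Rightarrow> real) \<Rightarrow> bool" where
  "pos_unit_vec n \<beta> \<longleftrightarrow> sqrt (\<Sum>i<n. (\<beta> i)\<^sup>2) = 1 \<and> (\<forall>i<n. 0 \<le> \<beta> i)"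

end

theory Submission imports Defs begin

text \<open>The inclusion from left to right is just multiplicativity of the quaternion norm.
  Conversely, given prescribed values \<open>w i j\<close> of the right norms, one solves
  \<open>\<beta>\<^sub>i\<beta>\<^sub>j z\<^sub>i\<^sup>* a\<^sub>i\<^sub>j z\<^sub>j = w\<^sub>i\<^sub>j\<close> for unit quaternions by growing a connected set of vertices
  one at a time. Non-edges impose no condition, and a new vertex \<open>v\<close> is adjacent to exactly
  one already labelled vertex \<open>u\<close> (otherwise the tree would contain a cycle), while upper
  triangularity leaves only one of \<open>a\<^sub>u\<^sub>v, a\<^sub>v\<^sub>u\<close> nonzero; so a single equation
  \<open>p\<^sup>* X q = w\<close> with \<open>|w| = |X|\<close> and \<open>|p| = 1\<close> has to be solved for a unit \<open>q\<close>, which is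
  always possible.\<close>

section \<open>Quaternion algebra\<close>

lemma qnorm_nonneg: "qnorm x \<ge> 0"
  unfolding qnorm_def by simp

lemma qnorm_squared: "(qnorm x)\<^sup>2 = (qre x)\<^sup>2 + (qi x)\<^sup>2 + (qj x)\<^sup>2 + (qk x)\<^sup>2"
  unfolding qnorm_def by simp

lemma qnorm_mult: "qnorm (x * y) = qnorm x * qnorm y"
proof -
  have "(qnorm (x * y))\<^sup>2 = (qnorm x * qnorm y)\<^sup>2"
    unfolding power_mult_distrib qnorm_squared by (simp add: times_quat_def) algebra
  then show ?thesis
    using qnorm_nonneg by (metis mult_nonneg_nonneg power2_eq_imp_eq)
qed

lemma qnorm_eq_0_iff: "qnorm x = 0 \<longleftrightarrow> x = 0"
proof
  assume "qnorm x = 0"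
  then have "(qre x)\<^sup>2 + (qi x)\<^sup>2 + (qj x)\<^sup>2 + (qk x)\<^sup>2 = 0"
    using qnorm_squared[of x] by simp
  then show "x = 0"
    by (simp add: add_nonneg_eq_0_iff quat_eq_iff zero_quat_def)
qed (simp add: qnorm_def zero_quat_def)

lemma qnorm_zero [simp]: "qnorm 0 = 0"
  using qnorm_eq_0_iff by blast

lemma qnorm_one: "qnorm 1 = 1"
  by (simp add: qnorm_def one_quat_def)

lemma qnorm_qreal: "qnorm (qreal r) = \<bar>r\<bar>"
  by (simp add: qreal_def qnorm_def)

lemma qnorm_qcnj: "qnorm (qcnj x) = qnorm x"
  by (simp add: qcnj_def qnorm_def)

lemma qreal_mult: "qreal r * qreal s = qreal (r * s)"
  by (simp add: qreal_def times_quat_def)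

lemma qreal_one: "qreal 1 = 1"
  by (simp add: qreal_def one_quat_def)

lemma qreal_commute: "qreal r * x = x * qreal r"
  by (simp add: qreal_def times_quat_def quat_eq_iff)

lemma qcnj_mult: "qcnj (x * y) = qcnj y * qcnj x"
  by (simp add: qcnj_def times_quat_def quat_eq_iff algebra_simps)

lemma qcnj_qcnj: "qcnj (qcnj x) = x"
  by (simp add: qcnj_def quat_eq_iff)

lemma qcnj_mult_self: "qcnj x * x = qreal ((qnorm x)\<^sup>2)"
  unfolding qnorm_squared
  by (simp add: qcnj_def times_quat_def qreal_def quat_eq_iff power2_eq_square algebra_simps)

lemma mult_qcnj_self: "x * qcnj x = qreal ((qnorm x)\<^sup>2)"
  unfolding qnorm_squared
  by (simp add: qcnj_def times_quat_def qreal_def quat_eq_iff power2_eq_square algebra_simps)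

lemma qcnj_mult_self_unit: "qnorm p = 1 \<Longrightarrow> qcnj p * p = 1"
  by (simp add: qcnj_mult_self qreal_one)

lemma unit_solution_right:
  assumes p: "qnorm p = 1" and w: "qnorm w = qnorm X"
  shows "\<exists>q. qnorm q = 1 \<and> qcnj p * X * q = w"
proof (cases "X = 0")
  case True
  with w have "w = 0" by (simp add: qnorm_eq_0_iff)
  with True show ?thesis by (intro exI[of _ 1]) (simp add: qnorm_one)
next
  case False
  then have X: "qnorm X \<noteq> 0" by (simp add: qnorm_eq_0_iff)
  \<comment> \<open>\<open>q = X\<^sup>-\<^sup>1 p w\<close>, where \<open>X\<^sup>-\<^sup>1 = X\<^sup>* / |X|\<^sup>2\<close>\<close>
  define q where "q = qcnj X * qreal (1 / (qnorm X)\<^sup>2) * p * w"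
  have "X * q = (X * qcnj X) * qreal (1 / (qnorm X)\<^sup>2) * p * w"
    unfolding q_def by (simp only: mult.assoc)
  also have "\<dots> = p * w"
    using X by (simp add: mult_qcnj_self qreal_mult qreal_one)
  finally have "qcnj p * X * q = (qcnj p * p) * w"
    by (simp add: mult.assoc)
  then have "qcnj p * X * q = w"
    using p by (simp add: qcnj_mult_self_unit)
  moreover have "qnorm q = 1"
    using X p w by (simp add: q_def qnorm_mult qnorm_qreal qnorm_qcnj power2_eq_square)
  ultimately show ?thesis by blast
qed

lemma unit_solution_left:
  assumes p: "qnorm p = 1" and w: "qnorm w = qnorm X"
  shows "\<exists>q. qnorm q = 1 \<and> qcnj q * X * p = w"
proof -
  obtain q where q: "qnorm q = 1" "qcnj p * qcnj X * q = qcnj w"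
    using unit_solution_right[OF p, of "qcnj w" "qcnj X"] w by (auto simp: qnorm_qcnj)
  have "qcnj q * X * p = qcnj (qcnj p * qcnj X * q)"
    by (simp only: qcnj_mult qcnj_qcnj mult.assoc)
  then show ?thesis
    using q by (auto simp: qcnj_qcnj)
qed

lemma gedge_commute: "gedge A i j = gedge A j i"
  unfolding gedge_def by blast

lemma gwalk_rev:
  assumes "gwalk n A p"
  shows "gwalk n A (rev p)"
  unfolding gwalk_def
proof (intro conjI allI impI)
  show "rev p \<noteq> []" "set (rev p) \<subseteq> {..<n}"
    using assms unfolding gwalk_def by auto
  fix k assume k: "Suc k < length (rev p)"
  define m where "m = length p - 2 - k"
  have m: "Suc m < length p" "rev p ! k = p ! Suc m" "rev p ! Suc k = p ! m"
    using k unfolding m_def by (auto simp: rev_nth Suc_diff_Suc numeral_2_eq_2)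
  have "gedge A (p ! m) (p ! Suc m)"
    using assms m(1) unfolding gwalk_def by blast
  then show "gedge A (rev p ! k) (rev p ! Suc k)"
    using m gedge_commute by metis
qed

lemma gwalk_snoc:
  assumes "gwalk n A p" "v < n" "gedge A (last p) v"
  shows "gwalk n A (p @ [v])"
  unfolding gwalk_def
proof (intro conjI allI impI)
  show "p @ [v] \<noteq> []" "set (p @ [v]) \<subseteq> {..<n}"
    using assms unfolding gwalk_def by auto
  fix k assume k: "Suc k < length (p @ [v])"
  show "gedge A ((p @ [v]) ! k) ((p @ [v]) ! Suc k)"
  proof (cases "Suc k < length p")
    case True
    then show ?thesis using assms(1) unfolding gwalk_def by (simp add: nth_append)
  next
    case False
    then have "k = length p - 1" "p \<noteq> []"
      using k assms(1) unfolding gwalk_def by auto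
    then show ?thesis
      using assms(3) by (simp add: nth_append last_conv_nth)
  qed
qed

lemma list_exits_set:
  assumes "p \<noteq> []" "hd p \<in> S" "last p \<notin> S"
  shows "\<exists>k. Suc k < length p \<and> p ! k \<in> S \<and> p ! Suc k \<notin> S"
  using assms
proof (induction p)
  case (Cons a p)
  then have "p \<noteq> []" by auto
  show ?case
  proof (cases "hd p \<in> S")
    case True
    then obtain k where "Suc k < length p" "p ! k \<in> S" "p ! Suc k \<notin> S"
      using Cons \<open>p \<noteq> []\<close> by auto
    then show ?thesis by (intro exI[of _ "Suc k"]) auto
  next
    case False
    then show ?thesis
      using Cons \<open>p \<noteq> []\<close> by (intro exI[of _ 0]) (auto simp: hd_conv_nth)
  qed
qed simp

lemma graph_connected_exit_edge:
  assumes "graph_connected n A" "S \<subseteq> {..<n}" "s \<in> S" "t < n" "t \<notin> S"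
  obtains u v where "u \<in> S" "v \<notin> S" "v < n" "gedge A u v"
proof -
  obtain p where p: "gwalk n A p" "hd p = s" "last p = t"
    using assms unfolding graph_connected_def by blast
  then have "p \<noteq> []" unfolding gwalk_def by blast
  then obtain k where k: "Suc k < length p" "p ! k \<in> S" "p ! Suc k \<notin> S"
    using list_exits_set p assms(3,5) by metis
  moreover have "p ! Suc k < n" "gedge A (p ! k) (p ! Suc k)"
    using p(1) k(1) nth_mem unfolding gwalk_def by blast+
  ultimately show ?thesis using that by blast
qed

definition path_within :: "nat \<Rightarrow> qmat \<Rightarrow> nat set \<Rightarrow> nat \<Rightarrow> nat \<Rightarrow> bool" where
  "path_within n A S x y \<longleftrightarrow>
     (\<exists>p. gwalk n A p \<and> distinct p \<and> set p \<subseteq> S \<and> hd p = x \<and> last p = y)"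

lemma path_within_refl: "x < n \<Longrightarrow> x \<in> S \<Longrightarrow> path_within n A S x x"
  unfolding path_within_def gwalk_def by (intro exI[of _ "[x]"]) auto

lemma path_within_mono: "path_within n A S x y \<Longrightarrow> S \<subseteq> T \<Longrightarrow> path_within n A T x y"
  unfolding path_within_def by blast

lemma path_within_extend:
  assumes "path_within n A S x u" "v \<notin> S" "v < n" "gedge A u v"
  shows "path_within n A (insert v S) x v" "path_within n A (insert v S) v x"
proof -
  obtain p where p: "gwalk n A p" "distinct p" "set p \<subseteq> S" "hd p = x" "last p = u"
    using assms(1) unfolding path_within_def by blast
  then have "p \<noteq> []" unfolding gwalk_def by blast
  have walk: "gwalk n A (p @ [v])"
    using gwalk_snoc[OF p(1) assms(3)] p(5) assms(4) by simp
  have "distinct (p @ [v])" "set (p @ [v]) \<subseteq> insert v S"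
    using p(2,3) assms(2) by auto
  with walk gwalk_rev[OF walk] \<open>p \<noteq> []\<close> p(4)
  show "path_within n A (insert v S) x v" "path_within n A (insert v S) v x"
    unfolding path_within_def
    by (metis distinct_rev hd_append2 hd_rev last_rev last_snoc set_rev)+
qed

text \<open>Two neighbours of \<open>v\<close> joined by a path avoiding \<open>v\<close> close a cycle.\<close>

lemma cycle_free_unique_neighbour:
  assumes "cycle_free n A" "path_within n A S u s" "u \<noteq> s"
    and "v \<notin> S" "v < n" "gedge A u v" "gedge A s v"
  shows False
proof -
  obtain p where p: "gwalk n A p" "distinct p" "set p \<subseteq> S" "hd p = u" "last p = s"
    using assms(2) unfolding path_within_def by blast
  then have "p \<noteq> []" unfolding gwalk_def by blast
  have "2 \<le> length p"
  proof (rule ccontr)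
    assume "\<not> 2 \<le> length p"
    with \<open>p \<noteq> []\<close> obtain a where "p = [a]" by (cases p; cases "tl p") auto
    with p assms(3) show False by simp
  qed
  moreover have "gwalk n A (p @ [v])"
    using gwalk_snoc[OF p(1) assms(5)] p(5) assms(7) by simp
  moreover have "distinct (p @ [v])"
    using p(2,3) assms(4) by auto
  moreover have "gedge A (last (p @ [v])) (hd (p @ [v]))"
    using \<open>p \<noteq> []\<close> p(4) assms(6) gedge_commute by auto
  ultimately have "has_cycle n A"
    unfolding has_cycle_def by (intro disjI2 exI[of _ "p @ [v]"]) auto
  then show False
    using assms(1) unfolding cycle_free_def by blast
qed

lemma cycle_free_no_loop: "cycle_free n A \<Longrightarrow> i < n \<Longrightarrow> \<not> gedge A i i"
  unfolding cycle_free_def has_cycle_def by blast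

section \<open>Solving edge constraints along a tree\<close>

context
  fixes n :: nat and A :: qmat and U :: "'a set" and \<Phi> :: "nat \<Rightarrow> nat \<Rightarrow> 'a \<Rightarrow> 'a \<Rightarrow> bool"
  assumes tree: "is_tree n A"
    and non_edge: "\<And>i j a b. i < n \<Longrightarrow> j < n \<Longrightarrow> \<not> gedge A i j \<Longrightarrow> a \<in> U \<Longrightarrow> b \<in> U
      \<Longrightarrow> \<Phi> i j a b"
    and edge: "\<And>u v a. u < n \<Longrightarrow> v < n \<Longrightarrow> u \<noteq> v \<Longrightarrow> gedge A u v \<Longrightarrow> a \<in> U
      \<Longrightarrow> \<exists>b\<in>U. \<Phi> u v a b \<and> \<Phi> v u b a"
    and U_nonempty: "U \<noteq> {}"
begin

definition consistent_labelling :: "nat set \<Rightarrow> (nat \<Rightarrow> 'a) \<Rightarrow> bool" where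
  "consistent_labelling S z \<longleftrightarrow> S \<subseteq> {..<n} \<and> (\<forall>x\<in>S. \<forall>y\<in>S. path_within n A S x y) \<and>
     (\<forall>i\<in>S. z i \<in> U) \<and> (\<forall>i\<in>S. \<forall>j\<in>S. \<Phi> i j (z i) (z j))"

lemma consistent_labelling_singleton:
  assumes "i < n"
  shows "\<exists>z. consistent_labelling {i} z"
proof -
  obtain a where "a \<in> U" using U_nonempty by blast
  moreover have "\<not> gedge A i i"
    using tree assms cycle_free_no_loop unfolding is_tree_def by blast
  ultimately show ?thesis
    using assms non_edge unfolding consistent_labelling_def
    by (intro exI[of _ "\<lambda>_. a"]) (auto intro: path_within_refl)
qed

lemma consistent_labelling_extend:
  assumes z: "consistent_labelling S z" and "s \<in> S" "t < n" "t \<notin> S"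
  shows "\<exists>v z'. v \<notin> S \<and> consistent_labelling (insert v S) z'"
proof -
  have S: "S \<subseteq> {..<n}" "\<forall>x\<in>S. \<forall>y\<in>S. path_within n A S x y" "\<forall>i\<in>S. z i \<in> U"
    "\<forall>i\<in>S. \<forall>j\<in>S. \<Phi> i j (z i) (z j)"
    using z unfolding consistent_labelling_def by blast+
  have conn: "graph_connected n A" and cf: "cycle_free n A"
    using tree unfolding is_tree_def by blast+
  obtain u v where uv: "u \<in> S" "v \<notin> S" "v < n" "gedge A u v"
    using graph_connected_exit_edge[OF conn S(1) assms(2-4)] by blast
  have unique: "s = u" if "s \<in> S" "gedge A s v" for s
    using cycle_free_unique_neighbour[OF cf _ _ uv(2,3,4) that(2)] S(2) uv(1) that(1) by blast
  have "u < n" "u \<noteq> v" using S(1) uv by auto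
  then obtain q where q: "q \<in> U" "\<Phi> u v (z u) q" "\<Phi> v u q (z u)"
    using edge uv S(3) by blast
  define z' where "z' = z(v := q)"
  have z'_U: "\<forall>i\<in>insert v S. z' i \<in> U"
    using S(3) q(1) uv(2) by (auto simp: z'_def)
  have "\<Phi> i j (z' i) (z' j)" if ij: "i \<in> insert v S" "j \<in> insert v S" for i j
  proof (cases "i \<in> S \<and> j \<in> S")
    case True
    then show ?thesis using S(4) uv(2) by (auto simp: z'_def)
  next
    case outside: False
    show ?thesis
    proof (cases "gedge A i j")
      case True
      have "i \<noteq> j" using True cf cycle_free_no_loop ij S(1) uv(3) by blast
      with True outside ij have "(i = u \<and> j = v) \<or> (i = v \<and> j = u)"
        using unique gedge_commute by blast
      then show ?thesis using q(2,3) uv(2) \<open>u \<noteq> v\<close> by (auto simp: z'_def)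
    next
      case False
      moreover have "i < n" "j < n" using ij S(1) uv(3) by auto
      ultimately show ?thesis using non_edge z'_U ij by blast
    qed
  qed
  moreover have "path_within n A (insert v S) x y" if "x \<in> insert v S" "y \<in> insert v S" for x y
    using that S(2) uv path_within_extend[of n A S _ u v] path_within_refl[OF uv(3)]
      path_within_mono[of n A S _ _ "insert v S"]
    by (auto simp: subset_insertI)
  ultimately have "consistent_labelling (insert v S) z'"
    using S(1) uv(3) z'_U unfolding consistent_labelling_def by auto
  with uv(2) show ?thesis by blast
qed

lemma consistent_labelling_of_card:
  assumes "1 \<le> k" "k \<le> n"
  shows "\<exists>S z. consistent_labelling S z \<and> card S = k"
  using assms
proof (induction k rule: dec_induct)
  case base
  then show ?case using consistent_labelling_singleton[of 0] assms by fastforce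
next
  case (step m)
  then obtain S z where z: "consistent_labelling S z" and "card S = m" by auto
  moreover have S: "S \<subseteq> {..<n}" "finite S"
    using z unfolding consistent_labelling_def by (auto intro: finite_subset)
  ultimately have "S \<noteq> {..<n}" "S \<noteq> {}" using step by auto
  then obtain s t where "s \<in> S" "t < n" "t \<notin> S" using S(1) by blast
  then obtain v z' where "v \<notin> S" "consistent_labelling (insert v S) z'"
    using consistent_labelling_extend[OF z] by blast
  with S(2) \<open>card S = m\<close> show ?case by (intro exI[of _ "insert v S"]) auto
qed

lemma tree_constraints_solvable: "\<exists>z. (\<forall>i<n. z i \<in> U) \<and> (\<forall>i<n. \<forall>j<n. \<Phi> i j (z i) (z j))"
proof (cases "n = 0")
  case False
  then obtain S z where z: "consistent_labelling S z" and "card S = n"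
    using consistent_labelling_of_card[of n] by auto
  then have "S = {..<n}"
    unfolding consistent_labelling_def by (simp add: card_subset_eq)
  with z show ?thesis unfolding consistent_labelling_def by blast
qed simp

end

lemma weighted_term_in_qsphere:
  assumes "qnorm a = 1" "qnorm b = 1" "0 \<le> r"
  shows "qreal r * qcnj a * X * b \<in> qsphere (r * qnorm X)"
  using assms by (simp add: qsphere_def qnorm_mult qnorm_qreal qnorm_qcnj)

lemma qsphere_zero [simp]: "w \<in> qsphere 0 \<longleftrightarrow> w = 0"
  by (simp add: qsphere_def qnorm_eq_0_iff)

lemma qreal_mult_qcnj_assoc: "qreal r * qcnj a * X * b = qcnj a * (qreal r * X) * b"
  by (simp add: qreal_commute mult.assoc)

text \<open>At most one of the two entries of an edge is nonzero, so only one of the two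
  equations constrains the new unit \<open>b\<close>.\<close>

lemma edge_terms_solvable:
  assumes XY: "X = 0 \<or> Y = 0" and "0 \<le> r" and a: "qnorm a = 1"
    and W: "W \<in> qsphere (r * qnorm X)" and V: "V \<in> qsphere (r * qnorm Y)"
  shows "\<exists>b. qnorm b = 1 \<and> qreal r * qcnj a * X * b = W \<and> qreal r * qcnj b * Y * a = V"
proof (cases "X = 0")
  case True
  have "qnorm V = qnorm (qreal r * Y)"
    using V \<open>0 \<le> r\<close> by (simp add: qsphere_def qnorm_mult qnorm_qreal)
  then obtain b where "qnorm b = 1" "qcnj b * (qreal r * Y) * a = V"
    using unit_solution_left[OF a] by blast
  with True W show ?thesis
    by (auto simp: qreal_mult_qcnj_assoc)
next
  case False
  with XY have "Y = 0" by blast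
  have "qnorm W = qnorm (qreal r * X)"
    using W \<open>0 \<le> r\<close> by (simp add: qsphere_def qnorm_mult qnorm_qreal)
  then obtain b where "qnorm b = 1" "qcnj a * (qreal r * X) * b = W"
    using unit_solution_right[OF a] by blast
  with \<open>Y = 0\<close> V show ?thesis
    by (auto simp: qreal_mult_qcnj_assoc)
qed

lemma upper_triangular_edge_entry_zero:
  "upper_triangular n A \<Longrightarrow> i < n \<Longrightarrow> j < n \<Longrightarrow> i \<noteq> j \<Longrightarrow> A i j = 0 \<or> A j i = 0"
  unfolding upper_triangular_def by (metis linorder_neqE_nat)

lemma tree_weighted_terms_solvable:
  assumes ut: "upper_triangular n A" and tree: "is_tree n A" and \<beta>: "\<forall>i<n. 0 \<le> \<beta> i"
    and w: "\<forall>i<n. \<forall>j<n. w i j \<in> qsphere (\<beta> i * \<beta> j * qnorm (A i j))"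
  shows "\<exists>z. (\<forall>i<n. z i \<in> unit_quats) \<and>
    (\<forall>i<n. \<forall>j<n. qreal (\<beta> i * \<beta> j) * qcnj (z i) * A i j * z j = w i j)"
proof (rule tree_constraints_solvable[OF tree])
  fix i j a b assume "i < n" "j < n" "\<not> gedge A i j"
  then have "A i j = 0" "w i j \<in> qsphere (\<beta> i * \<beta> j * qnorm (A i j))"
    using w unfolding gedge_def by blast+
  then show "qreal (\<beta> i * \<beta> j) * qcnj a * A i j * b = w i j"
    by simp
next
  fix u v a assume uv: "u < n" "v < n" "u \<noteq> v" and "a \<in> unit_quats"
  then show "\<exists>b\<in>unit_quats. qreal (\<beta> u * \<beta> v) * qcnj a * A u v * b = w u v \<and>
      qreal (\<beta> v * \<beta> u) * qcnj b * A v u * a = w v u"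
    using edge_terms_solvable[OF upper_triangular_edge_entry_zero[OF ut uv]] \<beta> w
    by (simp add: unit_quats_def qsphere_def mult.commute[of "\<beta> v"])
next
  show "unit_quats \<noteq> {}"
    using qnorm_one by (auto simp: unit_quats_def qsphere_def)
qed

theorem lemma3p4:
  fixes n :: nat and A :: qmat and \<beta> :: "nat \<Rightarrow> real"
  assumes "upper_triangular n A" and "nilpotent_mat n A"
    and "is_tree n A"
    and "pos_unit_vec n \<beta>"
  shows "{(\<Sum>i<n. \<Sum>j<n. qreal (\<beta> i * \<beta> j) * qcnj (z i) * A i j * z j) | z.
            \<forall>i<n. z i \<in> unit_quats}
       = {(\<Sum>i<n. \<Sum>j<n. w i j) | w.
            \<forall>i<n. \<forall>j<n. w i j \<in> qsphere (\<beta> i * \<beta> j * qnorm (A i j))}"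
proof -
  have \<beta>: "\<forall>i<n. 0 \<le> \<beta> i"
    using assms(4) unfolding pos_unit_vec_def by blast
  let ?t = "\<lambda>z i j. qreal (\<beta> i * \<beta> j) * qcnj (z i) * A i j * z j"
  let ?S = "\<lambda>i j. qsphere (\<beta> i * \<beta> j * qnorm (A i j))"
  show ?thesis
  proof (intro equalityI subsetI)
    fix x assume "x \<in> {(\<Sum>i<n. \<Sum>j<n. ?t z i j) | z. \<forall>i<n. z i \<in> unit_quats}"
    then obtain z where x: "x = (\<Sum>i<n. \<Sum>j<n. ?t z i j)" and z: "\<forall>i<n. z i \<in> unit_quats"
      by blast
    have "\<forall>i<n. \<forall>j<n. ?t z i j \<in> ?S i j"
      using z \<beta> by (intro allI impI weighted_term_in_qsphere) (auto simp: unit_quats_def qsphere_def)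
    with x show "x \<in> {(\<Sum>i<n. \<Sum>j<n. w i j) | w. \<forall>i<n. \<forall>j<n. w i j \<in> ?S i j}"
      by (intro CollectI exI[of _ "?t z"]) simp
  next
    fix x assume "x \<in> {(\<Sum>i<n. \<Sum>j<n. w i j) | w. \<forall>i<n. \<forall>j<n. w i j \<in> ?S i j}"
    then obtain w where x: "x = (\<Sum>i<n. \<Sum>j<n. w i j)" and "\<forall>i<n. \<forall>j<n. w i j \<in> ?S i j"
      by blast
    then obtain z where z: "\<forall>i<n. z i \<in> unit_quats" and "\<forall>i<n. \<forall>j<n. ?t z i j = w i j"
      using tree_weighted_terms_solvable[OF assms(1,3) \<beta>] by blast
    then have "x = (\<Sum>i<n. \<Sum>j<n. ?t z i j)"
      unfolding x by simp
    with z show "x \<in> {(\<Sum>i<n. \<Sum>j<n. ?t z i j) | z. \<forall>i<n. z i \<in> unit_quats}"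
      by blast
  qed
qed

end
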